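(* Let $\mathcal G$ be a doubly connected molecular graph. Construct $\mathcal G_{new}$ from $\mathcal G$ as follows: add a new molecule $\mathcal M_{new}$; replace a diffusive edge $b_0$ of $\mathcal G$ joining molecules $\mathcal M_1$ and $\mathcal M_2$ by two diffusive edges, $b_1$ joining $\mathcal M_1$ and $\mathcal M_{new}$ and $b_2$ joining $\mathcal M_2$ and $\mathcal M_{new}$; and replace another diffusive edge $b\neq b_0$ of $\mathcal G$ joining molecules $\mathcal M_3$ and $\mathcal M_4$ by two diffusive edges, $b_3$ joining $\mathcal M_3$ and $\mathcal M_{new}$ and $b_4$ joining $\mathcal M_4$ and $\mathcal M_{new}$. If a blue solid edge is redundant in $\mathcal G$, then it is also redundant in $\mathcal G_{new}$.
   Context: A molecular graph is a finite multigraph whose vertices are called molecules and each of whose edges joins two distinct molecules and is either a diffusive edge or a blue solid edge (parallel edges are allowed). A molecular graph is doubly connected if there exist two disjoint sets of edges, $\mathcal B_{black}$ consisting only of diffusive edges and $\mathcal B_{blue}$ consisting only of blue solid or diffusive edges, such that each of $\mathcal B_{black}$ and $\mathcal B_{blue}$ contains a spanning tree of the set of all molecules. A blue solid edge $e$ of a doubly connected graph is redundant if the graph obtained by deleting $e$ is still doubly connected. *)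

theory Defs
  imports Main
begin

datatype edge_kind = Diffusive | BlueSolid

text \<open>A molecular graph: molecules V, edge identifiers E (multigraph, parallel edges
allowed), endpoints ep e = (u,w) of an edge, and the kind of each edge.\<close>

definition molecular_graph ::
  "'v set \<Rightarrow> 'e set \<Rightarrow> ('e \<Rightarrow> 'v \<times> 'v) \<Rightarrow> ('e \<Rightarrow> edge_kind) \<Rightarrow> bool" where
  "molecular_graph V E ep kd \<longleftrightarrow> finite V \<and> finite E \<and>
     (\<forall>e\<in>E. fst (ep e) \<in> V \<and> snd (ep e) \<in> V \<and> fst (ep e) \<noteq> snd (ep e))"

definition joins :: "('e \<Rightarrow> 'v \<times> 'v) \<Rightarrow> 'e \<Rightarrow> 'v \<Rightarrow> 'v \<Rightarrow> bool" where
  "joins ep e u w \<longleftrightarrow> ep e = (u, w) \<or> ep e = (w, u)"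

definition adj :: "('e \<Rightarrow> 'v \<times> 'v) \<Rightarrow> 'e set \<Rightarrow> ('v \<times> 'v) set" where
  "adj ep T = {(u, w). \<exists>e\<in>T. joins ep e u w}"

definition connected_on :: "'v set \<Rightarrow> ('e \<Rightarrow> 'v \<times> 'v) \<Rightarrow> 'e set \<Rightarrow> bool" where
  "connected_on V ep T \<longleftrightarrow> (\<forall>u\<in>V. \<forall>w\<in>V. (u, w) \<in> (adj ep T)\<^sup>*)"

text \<open>T is a spanning tree of V: connected on V, and acyclic (every edge is a bridge,
i.e. T is minimally connected).\<close>
definition spanning_tree :: "'v set \<Rightarrow> ('e \<Rightarrow> 'v \<times> 'v) \<Rightarrow> 'e set \<Rightarrow> bool" where
  "spanning_tree V ep T \<longleftrightarrow> connected_on V ep T \<and>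
     (\<forall>e\<in>T. \<not> connected_on V ep (T - {e}))"

definition contains_spanning_tree :: "'v set \<Rightarrow> ('e \<Rightarrow> 'v \<times> 'v) \<Rightarrow> 'e set \<Rightarrow> bool" where
  "contains_spanning_tree V ep S \<longleftrightarrow> (\<exists>T\<subseteq>S. spanning_tree V ep T)"

definition doubly_connected ::
  "'v set \<Rightarrow> 'e set \<Rightarrow> ('e \<Rightarrow> 'v \<times> 'v) \<Rightarrow> ('e \<Rightarrow> edge_kind) \<Rightarrow> bool" where
  "doubly_connected V E ep kd \<longleftrightarrow>
     (\<exists>Bblack Bblue. Bblack \<subseteq> E \<and> Bblue \<subseteq> E \<and> Bblack \<inter> Bblue = {} \<and>
        (\<forall>e\<in>Bblack. kd e = Diffusive) \<and>
        (\<forall>e\<in>Bblue. kd e = BlueSolid \<or> kd e = Diffusive) \<and>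
        contains_spanning_tree V ep Bblack \<and> contains_spanning_tree V ep Bblue)"

definition redundant ::
  "'v set \<Rightarrow> 'e set \<Rightarrow> ('e \<Rightarrow> 'v \<times> 'v) \<Rightarrow> ('e \<Rightarrow> edge_kind) \<Rightarrow> 'e \<Rightarrow> bool" where
  "redundant V E ep kd e \<longleftrightarrow> e \<in> E \<and> kd e = BlueSolid \<and>
     doubly_connected V E ep kd \<and> doubly_connected V (E - {e}) ep kd"

end

(*
  Since the edge sets are finite, double connectedness only asks for two disjoint edge sets,
  the first one diffusive, each connecting all molecules: connected sets contain spanning
  trees. Take such sets X and Y for the old graph and replace b0 and b in them by the paths
  b1 b2 and b3 b4 through Mnew; both stay connected on the old molecules, and it remains to
  attach Mnew to each of them by a new edge. If neither set contains both b0 and b, there is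
  a free new edge for every set that does not already reach Mnew. If X contains both, then in
  X with the edge b = M3 M4 removed, Mnew lies in the component of M3 or of M4, so X needs
  only one of b3 and b4 and the other one is free for Y. Deleting a blue solid edge commutes
  with the construction, so redundancy is preserved.
*)
theory Submission
  imports Defs
begin

lemma sym_adj: "sym (adj ep T)"
  by (auto simp: sym_def adj_def joins_def)

lemma adj_rtrancl_sym: "(u, w) \<in> (adj ep T)\<^sup>* \<Longrightarrow> (w, u) \<in> (adj ep T)\<^sup>*"
  using sym_rtrancl[OF sym_adj, of ep T] by (auto simp: sym_def)

lemma edge_in_adj: "x \<in> T \<Longrightarrow> ep x \<in> adj ep T"
  by (cases "ep x") (auto simp: adj_def joins_def)

lemma adj_cong: "\<forall>x\<in>T. ep' x = ep x \<Longrightarrow> adj ep' T = adj ep T"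
  by (auto simp: adj_def joins_def)

lemma two_edge_path:
  assumes "k \<in> T" "l \<in> T" "ep k = (p, m)" "ep l = (q, m)"
  shows "(p, q) \<in> (adj ep T)\<^sup>*"
proof -
  have "(p, m) \<in> adj ep T" "(q, m) \<in> adj ep T"
    using edge_in_adj[of k T ep] edge_in_adj[of l T ep] assms by auto
  then show ?thesis
    using adj_rtrancl_sym by (meson r_into_rtrancl rtrancl_trans)
qed

lemma rtrancl_adj_insert_cases:
  assumes "(u, w) \<in> (adj ep (insert b T))\<^sup>*" "ep b = (p, q)"
  shows "(u, w) \<in> (adj ep T)\<^sup>* \<or> (p, w) \<in> (adj ep T)\<^sup>* \<or> (q, w) \<in> (adj ep T)\<^sup>*"
  using assms(1)
proof (induction rule: rtrancl_induct)
  case base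
  then show ?case by simp
next
  case (step w z)
  have "(w, z) \<in> adj ep T \<or> (w, z) = (p, q) \<or> (w, z) = (q, p)"
    using step.hyps(2) assms(2) by (auto simp: adj_def joins_def)
  then show ?case
    using step.IH by (auto intro: rtrancl_into_rtrancl)
qed

lemma connected_on_simulate:
  assumes "connected_on V ep S" "\<And>x. x \<in> S \<Longrightarrow> ep x \<in> (adj ep' T)\<^sup>*"
  shows "connected_on V ep' T"
proof -
  have "adj ep S \<subseteq> (adj ep' T)\<^sup>*"
  proof
    fix z assume "z \<in> adj ep S"
    then obtain x u w where "z = (u, w)" "x \<in> S" "ep x = (u, w) \<or> ep x = (w, u)"
      by (auto simp: adj_def joins_def)
    then show "z \<in> (adj ep' T)\<^sup>*"
      using assms(2) adj_rtrancl_sym by metis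
  qed
  then have "(adj ep S)\<^sup>* \<subseteq> (adj ep' T)\<^sup>*"
    by (rule rtrancl_subset_rtrancl)
  then show ?thesis
    using assms(1) unfolding connected_on_def by blast
qed

lemma connected_on_mono: "connected_on V ep S \<Longrightarrow> S \<subseteq> T \<Longrightarrow> connected_on V ep T"
  by (erule connected_on_simulate) (auto intro: edge_in_adj)

lemma connected_on_cong: "connected_on V ep T \<Longrightarrow> \<forall>x\<in>T. ep' x = ep x \<Longrightarrow> connected_on V ep' T"
  unfolding connected_on_def using adj_cong[of T ep' ep] by simp

lemma connected_on_insert_pendant:
  assumes "connected_on V ep T" "ep k = (p, m)" "p \<in> V"
  shows "connected_on (insert m V) ep (insert k T)"
proof -
  let ?R = "(adj ep (insert k T))\<^sup>*"
  have old: "(u, w) \<in> ?R" if "u \<in> V" "w \<in> V" for u w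
    using connected_on_mono[OF assms(1), of "insert k T"] that
    unfolding connected_on_def by blast
  have "(p, m) \<in> ?R"
    using edge_in_adj[of k "insert k T" ep] assms(2) by auto
  then have "(u, m) \<in> ?R" "(m, u) \<in> ?R" if "u \<in> V" for u
    using old[OF that assms(3)] adj_rtrancl_sym by (meson rtrancl_trans)+
  then show ?thesis
    using old unfolding connected_on_def by blast
qed

lemma connected_on_subdivide_edge:
  assumes conn: "connected_on V ep (insert b T)" and ep_b: "ep b = (p, q)"
    and agree: "\<forall>x\<in>T. ep' x = ep x" and ep_k: "ep' k = (p, m)" and ep_l: "ep' l = (q, m)"
  shows "connected_on V ep' (insert k (insert l T))"
proof (rule connected_on_simulate[OF conn])
  fix x assume "x \<in> insert b T"
  then show "ep x \<in> (adj ep' (insert k (insert l T)))\<^sup>*"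
  proof
    assume "x = b"
    then show ?thesis
      using two_edge_path[of k "insert k (insert l T)" l ep' p m q] ep_b ep_k ep_l by simp
  next
    assume "x \<in> T"
    then show ?thesis
      using agree edge_in_adj[of x "insert k (insert l T)" ep'] by auto
  qed
qed

lemma connected_on_reroute_edge:
  assumes conn: "connected_on W ep (insert b T)" and ep_b: "ep b = (p, q)"
    and "p \<in> W" "m \<in> W" and agree: "\<forall>x\<in>T. ep' x = ep x"
    and ep_k: "ep' k = (p, m)" and ep_l: "ep' l = (q, m)"
  shows "connected_on W ep' (insert k T) \<or> connected_on W ep' (insert l T)"
proof -
  have reroute: "connected_on W ep' T'"
    if "T \<subseteq> T'" "(p, q) \<in> (adj ep' T')\<^sup>*" for T'
  proof (rule connected_on_simulate[OF conn])
    fix x assume "x \<in> insert b T"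
    then show "ep x \<in> (adj ep' T')\<^sup>*"
      using that agree ep_b edge_in_adj[of x T' ep'] by (cases "x = b") force+
  qed
  have "(p, m) \<in> (adj ep (insert b T))\<^sup>*"
    using conn \<open>p \<in> W\<close> \<open>m \<in> W\<close> unfolding connected_on_def by blast
  then have "(p, m) \<in> (adj ep' T)\<^sup>* \<or> (q, m) \<in> (adj ep' T)\<^sup>*"
    using rtrancl_adj_insert_cases ep_b adj_cong[OF agree] by metis
  then show ?thesis
  proof
    assume "(p, m) \<in> (adj ep' T)\<^sup>*"
    then have "(p, m) \<in> (adj ep' (insert l T))\<^sup>*"
      by (rule rtrancl_mono[THEN subsetD, rotated]) (auto simp: adj_def)
    moreover have "(m, q) \<in> adj ep' (insert l T)"
      using ep_l by (auto simp: adj_def joins_def)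
    ultimately show ?thesis
      using reroute[of "insert l T"] by (meson rtrancl_into_rtrancl subset_insertI)
  next
    assume "(q, m) \<in> (adj ep' T)\<^sup>*"
    then have "(q, m) \<in> (adj ep' (insert k T))\<^sup>*"
      by (rule rtrancl_mono[THEN subsetD, rotated]) (auto simp: adj_def)
    then have "(m, q) \<in> (adj ep' (insert k T))\<^sup>*"
      by (rule adj_rtrancl_sym)
    moreover have "(p, m) \<in> adj ep' (insert k T)"
      using ep_k by (auto simp: adj_def joins_def)
    ultimately show ?thesis
      using reroute[of "insert k T"] by (meson converse_rtrancl_into_rtrancl subset_insertI)
  qed
qed

lemma contains_spanning_tree_if_connected_on:
  assumes "finite S" "connected_on V ep S"
  shows "contains_spanning_tree V ep S"
  using assms
proof (induction S rule: finite_psubset_induct)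
  case (psubset S)
  show ?case
  proof (cases "spanning_tree V ep S")
    case True
    then show ?thesis unfolding contains_spanning_tree_def by blast
  next
    case False
    then obtain x where "x \<in> S" "connected_on V ep (S - {x})"
      using psubset.prems unfolding spanning_tree_def by blast
    then have "contains_spanning_tree V ep (S - {x})"
      using psubset.IH by blast
    then show ?thesis unfolding contains_spanning_tree_def by blast
  qed
qed

lemma connected_on_if_contains_spanning_tree:
  "contains_spanning_tree V ep S \<Longrightarrow> connected_on V ep S"
  unfolding contains_spanning_tree_def spanning_tree_def using connected_on_mono by blast

lemma doubly_connected_iff_connected_on:
  assumes "finite F"
  shows "doubly_connected V F ep kd \<longleftrightarrow>
    (\<exists>X Y. X \<subseteq> F \<and> Y \<subseteq> F \<and> X \<inter> Y = {} \<and> (\<forall>x\<in>X. kd x = Diffusive) \<and>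
       connected_on V ep X \<and> connected_on V ep Y)"
proof -
  have "contains_spanning_tree V ep X \<longleftrightarrow> connected_on V ep X" if "X \<subseteq> F" for X
    using that assms finite_subset contains_spanning_tree_if_connected_on
      connected_on_if_contains_spanning_tree by metis
  moreover have "kd x = BlueSolid \<or> kd x = Diffusive" for x
    by (cases "kd x") auto
  ultimately show ?thesis
    unfolding doubly_connected_def by blast
qed

locale double_subdivision =
  fixes V :: "'v set" and E :: "'e set" and ep ep' :: "'e \<Rightarrow> 'v \<times> 'v"
    and Mnew M1 M2 M3 M4 :: 'v and b0 b b1 b2 b3 b4 :: 'e
  assumes ep'_old: "\<forall>x\<in>E - {b0, b}. ep' x = ep x"
    and ep_b0: "ep b0 = (M1, M2)" and ep_b: "ep b = (M3, M4)" and b_ne_b0: "b \<noteq> b0"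
    and ep'_b1: "ep' b1 = (M1, Mnew)" and ep'_b2: "ep' b2 = (M2, Mnew)"
    and ep'_b3: "ep' b3 = (M3, Mnew)" and ep'_b4: "ep' b4 = (M4, Mnew)"
    and endpoints_in_V: "M1 \<in> V" "M2 \<in> V" "M3 \<in> V" "M4 \<in> V"
    and new_edges: "b1 \<notin> E" "b2 \<notin> E" "b3 \<notin> E" "b4 \<notin> E" "distinct [b1, b2, b3, b4]"
begin

definition subdivided :: "'e set \<Rightarrow> 'e set" where
  "subdivided X = X - {b0, b} \<union> (if b0 \<in> X then {b1, b2} else {}) \<union>
     (if b \<in> X then {b3, b4} else {})"

lemma connected_on_subdivided:
  assumes "X \<subseteq> E" "connected_on V ep X"
  shows "connected_on V ep' (subdivided X)"
proof (rule connected_on_simulate[OF assms(2)])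
  fix x assume "x \<in> X"
  consider "x = b0" | "x = b" | "x \<in> E - {b0, b}"
    using \<open>x \<in> X\<close> assms(1) by blast
  then show "ep x \<in> (adj ep' (subdivided X))\<^sup>*"
  proof cases
    case 1
    then have new: "b1 \<in> subdivided X" "b2 \<in> subdivided X"
      using \<open>x \<in> X\<close> by (auto simp: subdivided_def)
    show ?thesis
      using two_edge_path[OF new ep'_b1 ep'_b2] ep_b0 1 by simp
  next
    case 2
    then have new: "b3 \<in> subdivided X" "b4 \<in> subdivided X"
      using \<open>x \<in> X\<close> by (auto simp: subdivided_def)
    show ?thesis
      using two_edge_path[OF new ep'_b3 ep'_b4] ep_b 2 by simp
  next
    case 3
    then have "x \<in> subdivided X"
      using \<open>x \<in> X\<close> by (simp add: subdivided_def)
    then show ?thesis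
      using 3 ep'_old edge_in_adj[of x _ ep'] by auto
  qed
qed

lemma connected_on_subdivide_both:
  assumes "X \<subseteq> E" "b0 \<in> X" "b \<in> X" "connected_on V ep X"
  shows "connected_on (insert Mnew V) ep' (insert b3 (X - {b0, b} \<union> {b1, b2})) \<or>
         connected_on (insert Mnew V) ep' (insert b4 (X - {b0, b} \<union> {b1, b2}))"
proof -
  let ?Z = "X - {b0, b} \<union> {b1, b2}"
  \<comment> \<open>ep' b is unconstrained; give b back its old endpoints so that it can be rerouted\<close>
  define ep'' where "ep'' = ep'(b := ep b)"
  have new_ne_b: "b1 \<noteq> b" "b2 \<noteq> b"
    using assms(1,3) new_edges by auto
  then have ep''_new: "ep'' b1 = (M1, Mnew)" "ep'' b2 = (M2, Mnew)"
    using ep'_b1 ep'_b2 by (simp_all add: ep''_def)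
  have conn_X: "connected_on V ep (insert b0 (X - {b0}))"
    using assms(2,4) by (simp add: insert_absorb)
  have "\<forall>x\<in>X - {b0}. ep'' x = ep x"
    using assms(1) ep'_old by (auto simp: ep''_def)
  then have "connected_on V ep'' (insert b1 (insert b2 (X - {b0})))"
    by (rule connected_on_subdivide_edge[OF conn_X ep_b0 _ ep''_new])
  then have "connected_on (insert Mnew V) ep'' (insert b1 (insert b2 (X - {b0})))"
    using ep''_new(1) endpoints_in_V(1) by (metis connected_on_insert_pendant insert_absorb2)
  moreover have "insert b1 (insert b2 (X - {b0})) = insert b ?Z"
    using assms(3) b_ne_b0 by blast
  moreover have "\<forall>x\<in>?Z. ep' x = ep'' x"
    using new_ne_b by (auto simp: ep''_def)
  ultimately show ?thesis
    using connected_on_reroute_edge[of "insert Mnew V" ep'' b ?Z M3 M4 Mnew ep' b3 b4]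
      ep_b ep'_b3 ep'_b4 endpoints_in_V(3) by (simp add: ep''_def)
qed

lemma connected_pair_subdivide_both:
  assumes "X \<subseteq> E" "Y \<subseteq> E" "X \<inter> Y = {}" "b0 \<in> X" "b \<in> X"
    and "connected_on V ep X" "connected_on V ep Y"
  obtains X' Y' where "X' \<subseteq> X - {b0, b} \<union> {b1, b2, b3, b4}" "Y' \<subseteq> Y - {b0, b} \<union> {b1, b2, b3, b4}"
    "X' \<inter> Y' = {}" "connected_on (insert Mnew V) ep' X'" "connected_on (insert Mnew V) ep' Y'"
proof -
  obtain k l where kl: "k = b3 \<and> l = b4 \<or> k = b4 \<and> l = b3"
    and conn_X: "connected_on (insert Mnew V) ep' (insert k (X - {b0, b} \<union> {b1, b2}))"
    using connected_on_subdivide_both[OF assms(1,4,5,6)] by blast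
  have "connected_on V ep' Y"
    using assms(2-5) ep'_old by (intro connected_on_cong[OF assms(7)]) auto
  then have conn_Y: "connected_on (insert Mnew V) ep' (insert l Y)"
    using kl ep'_b3 ep'_b4 endpoints_in_V connected_on_insert_pendant by metis
  show thesis
    by (rule that[OF _ _ _ conn_X conn_Y]) (use kl assms(1-5) new_edges in auto)
qed

lemma connected_pair_subdivide:
  assumes "X \<subseteq> E" "Y \<subseteq> E" "X \<inter> Y = {}"
    and "connected_on V ep X" "connected_on V ep Y"
  obtains X' Y' where "X' \<subseteq> X - {b0, b} \<union> {b1, b2, b3, b4}" "Y' \<subseteq> Y - {b0, b} \<union> {b1, b2, b3, b4}"
    "X' \<inter> Y' = {}" "connected_on (insert Mnew V) ep' X'" "connected_on (insert Mnew V) ep' Y'"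
proof -
  consider "b0 \<in> X" "b \<in> X" | "b0 \<in> Y" "b \<in> Y" | "b0 \<in> Y \<longrightarrow> b \<notin> Y" "b \<in> X \<longrightarrow> b0 \<notin> X"
    by blast
  then show thesis
  proof cases
    case 1
    show thesis
      by (rule connected_pair_subdivide_both[OF assms(1-3) 1 assms(4,5)]) (rule that)
  next
    case 2
    have "Y \<inter> X = {}"
      using assms(3) by blast
    then obtain Y' X' where
      "Y' \<subseteq> Y - {b0, b} \<union> {b1, b2, b3, b4}" "X' \<subseteq> X - {b0, b} \<union> {b1, b2, b3, b4}"
      "Y' \<inter> X' = {}" "connected_on (insert Mnew V) ep' Y'" "connected_on (insert Mnew V) ep' X'"
      by (rule connected_pair_subdivide_both[OF assms(2,1) _ 2 assms(5,4)])
    then show thesis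
      using that[of X' Y'] by (simp add: Int_commute)
  next
    case 3
    define kX where "kX = (if b0 \<in> Y then b3 else b1)"
    define kY where "kY = (if b \<in> X then b2 else b4)"
    have conn_X: "connected_on (insert Mnew V) ep' (insert kX (subdivided X))"
      using connected_on_insert_pendant[OF connected_on_subdivided[OF assms(1,4)]]
        ep'_b1 ep'_b3 endpoints_in_V by (simp add: kX_def)
    have conn_Y: "connected_on (insert Mnew V) ep' (insert kY (subdivided Y))"
      using connected_on_insert_pendant[OF connected_on_subdivided[OF assms(2,5)]]
        ep'_b2 ep'_b4 endpoints_in_V by (simp add: kY_def)
    have disjoint: "insert kX (subdivided X) \<inter> insert kY (subdivided Y) = {}"
      using 3 assms(1-3) new_edges by (auto simp: subdivided_def kX_def kY_def)
    show thesis
      by (rule that[OF _ _ disjoint conn_X conn_Y]) (auto simp: subdivided_def kX_def kY_def)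
  qed
qed

lemma doubly_connected_subdivide:
  assumes "finite F" "F \<subseteq> E" "doubly_connected V F ep kd"
    and "\<forall>x\<in>E - {b0, b}. kd' x = kd x" "\<forall>x\<in>{b1, b2, b3, b4}. kd' x = Diffusive"
  shows "doubly_connected (insert Mnew V) (F - {b0, b} \<union> {b1, b2, b3, b4}) ep' kd'"
proof -
  obtain X Y where XY: "X \<subseteq> F" "Y \<subseteq> F" "X \<inter> Y = {}" "\<forall>x\<in>X. kd x = Diffusive"
    "connected_on V ep X" "connected_on V ep Y"
    using assms(3) unfolding doubly_connected_iff_connected_on[OF assms(1)] by blast
  have "X \<subseteq> E" "Y \<subseteq> E"
    using XY(1,2) assms(2) by auto
  then obtain X' Y' where X'Y': "X' \<subseteq> X - {b0, b} \<union> {b1, b2, b3, b4}"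
    "Y' \<subseteq> Y - {b0, b} \<union> {b1, b2, b3, b4}" "X' \<inter> Y' = {}"
    "connected_on (insert Mnew V) ep' X'" "connected_on (insert Mnew V) ep' Y'"
    by (rule connected_pair_subdivide[OF _ _ XY(3,5,6)])
  have "\<forall>x\<in>X'. kd' x = Diffusive"
  proof
    fix x assume "x \<in> X'"
    then consider "x \<in> X - {b0, b}" | "x \<in> {b1, b2, b3, b4}"
      using X'Y'(1) by blast
    then show "kd' x = Diffusive"
      using \<open>X \<subseteq> E\<close> XY(4) assms(4,5) by cases auto
  qed
  moreover have "X' \<subseteq> F - {b0, b} \<union> {b1, b2, b3, b4}" "Y' \<subseteq> F - {b0, b} \<union> {b1, b2, b3, b4}"
    using X'Y'(1,2) XY(1,2) by auto
  moreover have "finite (F - {b0, b} \<union> {b1, b2, b3, b4})"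
    using assms(1) by simp
  ultimately show ?thesis
    using doubly_connected_iff_connected_on X'Y'(3-5) by metis
qed

end

theorem claimA5:
  fixes V :: "'v set" and E :: "'e set" and ep :: "'e \<Rightarrow> 'v \<times> 'v" and kd :: "'e \<Rightarrow> edge_kind"
    and V' :: "'v set" and E' :: "'e set" and ep' :: "'e \<Rightarrow> 'v \<times> 'v" and kd' :: "'e \<Rightarrow> edge_kind"
    and Mnew M1 M2 M3 M4 :: 'v and b0 b b1 b2 b3 b4 e :: 'e
  assumes G: "molecular_graph V E ep kd"
    and dc: "doubly_connected V E ep kd"
    and b0: "b0 \<in> E" "kd b0 = Diffusive" "ep b0 = (M1, M2)"
    and b: "b \<in> E" "kd b = Diffusive" "ep b = (M3, M4)" "b \<noteq> b0"
    and new_vertex: "Mnew \<notin> V" "V' = insert Mnew V"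
    and new_edges: "b1 \<notin> E" "b2 \<notin> E" "b3 \<notin> E" "b4 \<notin> E"
      "distinct [b1, b2, b3, b4]"
    and E': "E' = (E - {b0, b}) \<union> {b1, b2, b3, b4}"
    and ep': "\<forall>x\<in>E - {b0, b}. ep' x = ep x"
      "ep' b1 = (M1, Mnew)" "ep' b2 = (M2, Mnew)" "ep' b3 = (M3, Mnew)" "ep' b4 = (M4, Mnew)"
    and kd': "\<forall>x\<in>E - {b0, b}. kd' x = kd x"
      "kd' b1 = Diffusive" "kd' b2 = Diffusive" "kd' b3 = Diffusive" "kd' b4 = Diffusive"
    and red: "redundant V E ep kd e"
  shows "redundant V' E' ep' kd' e"
proof -
  have e: "e \<in> E" "kd e = BlueSolid" "doubly_connected V (E - {e}) ep kd"
    using red unfolding redundant_def by auto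
  have "finite E"
    using G unfolding molecular_graph_def by auto
  have "M1 \<in> V" "M2 \<in> V" "M3 \<in> V" "M4 \<in> V"
    using G b0(1,3) b(1,3) unfolding molecular_graph_def by (metis fst_conv snd_conv)+
  then interpret double_subdivision V E ep ep' Mnew M1 M2 M3 M4 b0 b b1 b2 b3 b4
    using ep' b0(3) b(3,4) new_edges by unfold_locales auto
  have "e \<notin> {b0, b, b1, b2, b3, b4}"
    using e(1,2) b0(2) b(2) new_edges by auto
  then have "E' - {e} = (E - {e}) - {b0, b} \<union> {b1, b2, b3, b4}"
    using E' by auto
  moreover have "kd' x = Diffusive" if "x \<in> {b1, b2, b3, b4}" for x
    using that kd'(2-5) by auto
  ultimately have "doubly_connected V' E' ep' kd'" "doubly_connected V' (E' - {e}) ep' kd'"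
    using doubly_connected_subdivide[of E kd kd'] doubly_connected_subdivide[of "E - {e}" kd kd']
      \<open>finite E\<close> dc e(3) kd'(1) new_vertex(2) E' by auto
  moreover have "e \<in> E'" "kd' e = BlueSolid"
    using \<open>e \<notin> {b0, b, b1, b2, b3, b4}\<close> e(1,2) E' kd'(1) by auto
  ultimately show ?thesis
    unfolding redundant_def by blast
qed

end
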